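(* Let $\lambda$ be a partition of $r$ and let $M$ be a $\mathbf{Z}S_r$-module that is free as a $\mathbf{Z}$-module. If $f:S^\lambda\to M$ is a non-zero homomorphism of $\mathbf{Z}S_r$-modules, then $f$ is injective.
   Context: $S^\lambda$ denotes the integral Specht module for $\mathbf{Z}S_r$ (the $\mathbf{Z}$-span of the $\lambda$-polytabloids in the Young permutation module $M^\lambda$). *)

theory Defs
  imports "HOL-Combinatorics.Permutations"
begin

definition is_partition :: "nat list \<Rightarrow> nat \<Rightarrow> bool" where
  "is_partition la r \<longleftrightarrow> sorted (rev la) \<and> (\<forall>x\<in>set la. 0 < x) \<and> sum_list la = r"

definition young_diagram :: "nat list \<Rightarrow> (nat \<times> nat) set" where
  "young_diagram la = {(i, j). i < length la \<and> j < la ! i}"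

text \<open>lambda-tableaux with entries 0..r-1 (symmetric group acts on {0..<r}).\<close>
definition tableaux :: "nat list \<Rightarrow> nat \<Rightarrow> ((nat \<times> nat) \<Rightarrow> nat) set" where
  "tableaux la r = {T. bij_betw T (young_diagram la) {0..<r}}"

text \<open>lambda-tabloids, represented as maps from {0..<r} to row indices
  (row j containing exactly la!j entries), extended by 0 outside {0..<r}.\<close>
definition tabloids :: "nat list \<Rightarrow> nat \<Rightarrow> (nat \<Rightarrow> nat) set" where
  "tabloids la r = {t. (\<forall>k. r \<le> k \<longrightarrow> t k = 0) \<and> (\<forall>k<r. t k < length la)
      \<and> (\<forall>j<length la. card {k. k < r \<and> t k = j} = la ! j)}"

definition tabloid_of :: "nat list \<Rightarrow> nat \<Rightarrow> ((nat \<times> nat) \<Rightarrow> nat) \<Rightarrow> (nat \<Rightarrow> nat)" where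
  "tabloid_of la r T = (\<lambda>k. if k < r then fst (inv_into (young_diagram la) T k) else 0)"

definition column_group :: "nat list \<Rightarrow> nat \<Rightarrow> ((nat \<times> nat) \<Rightarrow> nat) \<Rightarrow> (nat \<Rightarrow> nat) set" where
  "column_group la r T = {\<sigma>. \<sigma> permutes {0..<r} \<and>
      (\<forall>i j. (i, j) \<in> young_diagram la \<longrightarrow>
         (\<exists>i'. (i', j) \<in> young_diagram la \<and> \<sigma> (T (i, j)) = T (i', j)))}"

text \<open>Elements of the Young permutation module M^lambda are Z-valued functions on tabloids
  (coefficients w.r.t. the tabloid basis). The polytabloid
  e_T = sum over sigma in C_T of sign(sigma) {sigma T}.\<close>
definition polytabloid :: "nat list \<Rightarrow> nat \<Rightarrow> ((nat \<times> nat) \<Rightarrow> nat) \<Rightarrow> ((nat \<Rightarrow> nat) \<Rightarrow> int)" where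
  "polytabloid la r T = (\<lambda>s. \<Sum>\<sigma>\<in>column_group la r T.
       (if tabloid_of la r (\<sigma> \<circ> T) = s then sign \<sigma> else 0))"

definition specht :: "nat list \<Rightarrow> nat \<Rightarrow> ((nat \<Rightarrow> nat) \<Rightarrow> int) set" where
  "specht la r = {v. \<exists>F c. finite F \<and> F \<subseteq> tableaux la r \<and>
      v = (\<lambda>s. \<Sum>T\<in>F. c T * polytabloid la r T s)}"

text \<open>Action of a permutation sigma of {0..<r} on M^lambda, sigma.{t} = {sigma t}.\<close>
definition perm_vec :: "(nat \<Rightarrow> nat) \<Rightarrow> ((nat \<Rightarrow> nat) \<Rightarrow> int) \<Rightarrow> ((nat \<Rightarrow> nat) \<Rightarrow> int)" where
  "perm_vec \<sigma> v = (\<lambda>s. v (s \<circ> \<sigma>))"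

definition zscale :: "int \<Rightarrow> 'a::ab_group_add \<Rightarrow> 'a" where
  "zscale k x = (if 0 \<le> k then (\<Sum>i<nat k. x) else - (\<Sum>i<nat (- k). x))"

definition ZS_module :: "nat \<Rightarrow> ((nat \<Rightarrow> nat) \<Rightarrow> 'm::ab_group_add \<Rightarrow> 'm) \<Rightarrow> bool" where
  "ZS_module r act \<longleftrightarrow>
     (\<forall>\<sigma> x y. \<sigma> permutes {0..<r} \<longrightarrow> act \<sigma> (x + y) = act \<sigma> x + act \<sigma> y) \<and>
     (\<forall>x. act id x = x) \<and>
     (\<forall>\<sigma> \<tau> x. \<sigma> permutes {0..<r} \<longrightarrow> \<tau> permutes {0..<r} \<longrightarrow>
         act (\<sigma> \<circ> \<tau>) x = act \<sigma> (act \<tau> x))"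

definition free_Z_module :: "'m::ab_group_add itself \<Rightarrow> bool" where
  "free_Z_module _ \<longleftrightarrow> (\<exists>B::'m set. \<forall>m::'m. \<exists>!c::'m \<Rightarrow> int.
      (\<forall>b. b \<notin> B \<longrightarrow> c b = 0) \<and> finite {b. c b \<noteq> 0} \<and>
      m = (\<Sum>b\<in>{b. c b \<noteq> 0}. zscale (c b) b))"

definition specht_hom :: "nat list \<Rightarrow> nat \<Rightarrow> ((nat \<Rightarrow> nat) \<Rightarrow> 'm::ab_group_add \<Rightarrow> 'm)
    \<Rightarrow> (((nat \<Rightarrow> nat) \<Rightarrow> int) \<Rightarrow> 'm) \<Rightarrow> bool" where
  "specht_hom la r act f \<longleftrightarrow>
     (\<forall>x\<in>specht la r. \<forall>y\<in>specht la r. f (\<lambda>s. x s + y s) = f x + f y) \<and>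
     (\<forall>\<sigma> x. \<sigma> permutes {0..<r} \<longrightarrow> x \<in> specht la r \<longrightarrow> f (perm_vec \<sigma> x) = act \<sigma> (f x))"

end

theory Submission
  imports Defs
begin

text \<open>Suppose f z = 0 with z \<noteq> 0. The tabloids are orthonormal for the form
  \<langle>u, v\<rangle> = \<Sum>s. u s * v s, so 0 < \<langle>z, z\<rangle> and hence \<langle>z, e_T\<rangle> \<noteq> 0 for one of
  the polytabloids e_T occurring in z. By James' lemma the column antisymmetriser
  \<kappa>_T = \<Sum>\<pi>\<in>C_T. sign \<pi> \<cdot> \<pi> sends each tabloid {t} to \<langle>{t}, e_T\<rangle> e_T: either two
  entries of a column of T lie in the same row of t, and a transposition in C_T shows that
  both sides vanish, or t = {\<pi> T} for a unique \<pi> \<in> C_T. Thus \<kappa>_T z = \<langle>z, e_T\<rangle> e_T,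
  and applying f gives \<langle>z, e_T\<rangle> f(e_T) = \<kappa>_T f(z) = 0. Since M is torsion-free,
  f(e_T) = 0; as all polytabloids are S_r-translates of e_T and span S^\<lambda>, f = 0.\<close>

section \<open>Integer multiples in abelian groups\<close>

lemma zscale_0_left [simp]: "zscale 0 x = 0"
  by (simp add: zscale_def)

lemma zscale_0_right [simp]: "zscale a (0::'a::ab_group_add) = 0"
  by (simp add: zscale_def)

lemma zscale_add_right: "zscale a (x + y) = zscale a x + zscale a (y::'a::ab_group_add)"
  by (simp add: zscale_def sum.distrib)

lemma zscale_sum_right: "zscale a (\<Sum>b\<in>S. g b) = (\<Sum>b\<in>S. zscale a (g b :: 'a::ab_group_add))"
  by (induction S rule: infinite_finite_induct) (simp_all add: zscale_add_right)

lemma zscale_add1_left: "zscale (a + 1) x = zscale a x + (x::'a::ab_group_add)"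
proof (cases "0 \<le> a")
  case True
  then have "nat (a + 1) = Suc (nat a)" by simp
  with True show ?thesis by (simp add: zscale_def)
next
  case False
  show ?thesis
  proof (cases "a = -1")
    case False
    with \<open>\<not> 0 \<le> a\<close> have "nat (- a) = Suc (nat (- (a + 1)))" by simp
    with \<open>\<not> 0 \<le> a\<close> False show ?thesis by (simp add: zscale_def)
  qed (simp add: zscale_def)
qed

lemma zscale_diff1_left: "zscale (a - 1) x = zscale a x - (x::'a::ab_group_add)"
  using zscale_add1_left[of "a - 1" x] by simp

lemma zscale_add_left: "zscale (a + b) x = zscale a x + zscale b (x::'a::ab_group_add)"
proof (induction b rule: int_induct[where k=0])
  case (step1 i)
  have "zscale (a + (i + 1)) x = zscale (a + i) x + x"
    using zscale_add1_left[of "a + i" x] by (simp add: add.assoc)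
  with step1 show ?case using zscale_add1_left[of i x] by (simp add: add.assoc)
next
  case (step2 i)
  have "zscale (a + (i - 1)) x = zscale (a + i) x - x"
    using zscale_diff1_left[of "a + i" x] by (simp add: add_diff_eq)
  also have "\<dots> = zscale a x + (zscale i x - x)"
    using step2 by simp
  finally show ?case using zscale_diff1_left[of i x] by simp
qed simp

lemma zscale_uminus_left: "zscale (- a) x = - zscale a (x::'a::ab_group_add)"
  using zscale_add_left[of a "- a" x] by (simp add: minus_unique)

lemma zscale_mult_left: "zscale (a * b) x = zscale a (zscale b (x::'a::ab_group_add))"
proof (induction a rule: int_induct[where k=0])
  case (step1 i)
  have "zscale ((i + 1) * b) x = zscale (i * b) x + zscale b x"
    using zscale_add_left[of "i * b" b x] by (simp add: distrib_right)
  with step1 show ?case using zscale_add1_left[of i "zscale b x"] by simp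
next
  case (step2 i)
  have "zscale ((i - 1) * b) x = zscale (i * b) x + zscale (- b) x"
    using zscale_add_left[of "i * b" "- b" x] by (simp add: left_diff_distrib)
  with step2 show ?case using zscale_diff1_left[of i "zscale b x"] zscale_uminus_left[of b x] by simp
qed simp

text \<open>The coordinates of \<open>zscale a m\<close> are a times those of m, and by uniqueness
  the coordinates of 0 all vanish.\<close>
lemma free_Z_module_zscale_eq_0:
  assumes "free_Z_module TYPE('m::ab_group_add)" and "a \<noteq> 0" and "zscale a (m::'m) = 0"
  shows "m = 0"
proof -
  define rep :: "'m set \<Rightarrow> 'm \<Rightarrow> ('m \<Rightarrow> int) \<Rightarrow> bool" where
    "rep B x c \<longleftrightarrow> (\<forall>b. b \<notin> B \<longrightarrow> c b = 0) \<and> finite {b. c b \<noteq> 0} \<and>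
       x = (\<Sum>b\<in>{b. c b \<noteq> 0}. zscale (c b) b)" for B x c
  obtain B where B: "\<And>x. \<exists>!c. rep B x c"
    using assms(1) unfolding free_Z_module_def rep_def by blast
  obtain c where c: "rep B m c" using B by blast
  have supp: "{b. a * c b \<noteq> 0} = {b. c b \<noteq> 0}" using assms(2) by auto
  have "rep B (zscale a m) (\<lambda>b. a * c b)"
    using c unfolding rep_def supp by (simp add: zscale_sum_right zscale_mult_left)
  moreover have "rep B 0 (\<lambda>_. 0)" by (simp add: rep_def)
  moreover obtain c0 where "\<And>c'. rep B 0 c' \<Longrightarrow> c' = c0"
    using B[of 0] by (elim ex1E) blast
  ultimately have "(\<lambda>b. a * c b) = (\<lambda>_. 0)" using assms(3) by metis
  then have "{b. c b \<noteq> 0} = {}" using assms(2) by (auto simp: fun_eq_iff)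
  with c show ?thesis by (simp add: rep_def)
qed

section \<open>Young diagrams and tabloids\<close>

lemma sum_eq_card_sum_imp_lessThan:
  fixes A :: "nat set"
  assumes "finite A" and "\<Sum>A = \<Sum>{..<card A}"
  shows "A = {..<card A}"
  using assms
proof (induction "card A" arbitrary: A)
  case (Suc n)
  define m where "m = Max A"
  have mA: "m \<in> A" unfolding m_def using Suc.hyps(2) Suc.prems(1) by (intro Max_in) auto
  have "n \<le> m" unfolding m_def using card_le_Suc_Max[OF Suc.prems(1)] Suc.hyps(2) by simp
  define B where "B = A - {m}"
  have B: "finite B" "n = card B" unfolding B_def using Suc.hyps(2) Suc.prems(1) mA by auto
  have "\<Sum>{..<n} \<le> \<Sum>B" using card_sum_le_nat_sum[of B] B(2) by (simp add: atLeast0LessThan)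
  moreover have "\<Sum>A = m + \<Sum>B" unfolding B_def using Suc.prems(1) mA by (simp add: sum.remove)
  moreover have "\<Sum>{..<card A} = n + \<Sum>{..<n}" by (simp flip: Suc.hyps(2))
  ultimately have "m = n" "\<Sum>B = \<Sum>{..<n}" using Suc.prems(2) \<open>n \<le> m\<close> by linarith+
  then have "B = {..<n}" using Suc.hyps(1)[OF B(2) B(1)] B(2) by simp
  then have "A = insert n {..<n}" using \<open>m = n\<close> mA unfolding B_def by blast
  then show ?case by (simp flip: Suc.hyps(2) add: lessThan_Suc)
qed simp

lemma sum_lessThan_le_sum_inj_on:
  fixes h :: "nat \<Rightarrow> nat"
  assumes "inj_on h {..<n}"
  shows "(\<Sum>i<n. i) \<le> (\<Sum>i<n. h i)"
  using card_sum_le_nat_sum[of "h ` {..<n}"] assms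
  by (simp add: card_image sum.reindex atLeast0LessThan)

lemma image_eq_lessThan_if_sum_eq:
  fixes h :: "nat \<Rightarrow> nat"
  assumes "inj_on h {..<n}" and "(\<Sum>i<n. h i) = (\<Sum>i<n. i)"
  shows "h ` {..<n} = {..<n}"
  using sum_eq_card_sum_imp_lessThan[of "h ` {..<n}"] assms
  by (simp add: card_image sum.reindex)

lemma finite_young_diagram: "finite (young_diagram la)"
proof (rule finite_subset)
  show "young_diagram la \<subseteq> {..<length la} \<times> {..<Max (insert 0 (set la))}"
    by (auto simp: young_diagram_def intro!: order.strict_trans2[OF _ Max_ge])
qed simp

definition column_rows :: "nat list \<Rightarrow> nat \<Rightarrow> nat set" where
  "column_rows la j = {i. (i, j) \<in> young_diagram la}"

lemma finite_column_rows: "finite (column_rows la j)"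
  unfolding column_rows_def young_diagram_def by (rule finite_subset[of _ "{..<length la}"]) auto

lemma column_rows_eq_lessThan:
  assumes "sorted (rev la)"
  shows "column_rows la j = {..<card (column_rows la j)}"
proof (cases "column_rows la j = {}")
  case False
  define m where "m = Max (column_rows la j)"
  have m: "m \<in> column_rows la j" using Max_in[OF finite_column_rows False] by (simp add: m_def)
  have down: "i' \<in> column_rows la j" if "i \<in> column_rows la j" "i' \<le> i" for i i'
    using that sorted_rev_nth_mono[OF assms, of i' i] by (auto simp: column_rows_def young_diagram_def)
  have "column_rows la j = {..m}"
    using down[OF m] Max_ge[OF finite_column_rows] by (auto simp: m_def)
  then show ?thesis by (simp add: lessThan_Suc_atMost)
qed simp

lemma sum_young_diagram_by_columns:
  "(\<Sum>p\<in>young_diagram la. g p) = (\<Sum>j\<in>snd ` young_diagram la. \<Sum>i\<in>column_rows la j. g (i, j))"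
proof -
  have "(\<Sum>p\<in>young_diagram la. g p) =
      (\<Sum>j\<in>snd ` young_diagram la. \<Sum>p\<in>{p\<in>young_diagram la. snd p = j}. g p)"
    by (rule sum.group[symmetric]) (auto simp: finite_young_diagram)
  also have "\<dots> = (\<Sum>j\<in>snd ` young_diagram la. \<Sum>i\<in>column_rows la j. g (i, j))"
  proof (intro sum.cong refl)
    fix j
    have "{p\<in>young_diagram la. snd p = j} = (\<lambda>i. (i, j)) ` column_rows la j"
      by (auto simp: column_rows_def)
    then show "(\<Sum>p\<in>{p\<in>young_diagram la. snd p = j}. g p) = (\<Sum>i\<in>column_rows la j. g (i, j))"
      by (simp add: sum.reindex inj_on_def)
  qed
  finally show ?thesis .
qed

lemma sum_fst_young_diagram: "(\<Sum>p\<in>young_diagram la. fst p) = (\<Sum>i<length la. i * la ! i)"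
proof -
  have "(\<Sum>p\<in>young_diagram la. fst p) =
      (\<Sum>i<length la. \<Sum>p\<in>{p\<in>young_diagram la. fst p = i}. fst p)"
    by (rule sum.group[symmetric, OF finite_young_diagram finite_lessThan]) (auto simp: young_diagram_def)
  also have "\<dots> = (\<Sum>i<length la. i * la ! i)"
  proof (intro sum.cong refl)
    fix i assume "i \<in> {..<length la}"
    then have "{p\<in>young_diagram la. fst p = i} = (\<lambda>j. (i, j)) ` {..<la ! i}"
      by (auto simp: young_diagram_def)
    then show "(\<Sum>p\<in>{p\<in>young_diagram la. fst p = i}. fst p) = i * la ! i"
      by (simp add: sum.reindex inj_on_def)
  qed
  finally show ?thesis .
qed

lemma sum_tabloid:
  assumes "t \<in> tabloids la r"
  shows "(\<Sum>k<r. t k) = (\<Sum>i<length la. i * la ! i)"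
proof -
  have "(\<Sum>k<r. t k) = (\<Sum>i<length la. \<Sum>k\<in>{k\<in>{..<r}. t k = i}. t k)"
    by (rule sum.group[symmetric]) (use assms in \<open>auto simp: tabloids_def\<close>)
  also have "\<dots> = (\<Sum>i<length la. i * la ! i)"
  proof (intro sum.cong refl)
    fix i assume "i \<in> {..<length la}"
    moreover have "{k\<in>{..<r}. t k = i} = {k. k < r \<and> t k = i}" by auto
    ultimately show "(\<Sum>k\<in>{k\<in>{..<r}. t k = i}. t k) = i * la ! i"
      using assms by (simp add: tabloids_def)
  qed
  finally show ?thesis .
qed

lemma permutes_less_iff: "\<sigma> permutes {0..<(r::nat)} \<Longrightarrow> \<sigma> k < r \<longleftrightarrow> k < r"
  using permutes_in_image[of \<sigma> "{0..<r}" k] by simp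

definition box_of :: "nat list \<Rightarrow> ((nat \<times> nat) \<Rightarrow> nat) \<Rightarrow> nat \<Rightarrow> nat \<times> nat" where
  "box_of la T k = inv_into (young_diagram la) T k"

locale tableau =
  fixes la :: "nat list" and r :: nat and T :: "nat \<times> nat \<Rightarrow> nat"
  assumes tableau: "bij_betw T (young_diagram la) {0..<r}"
begin

lemma box_of_in_young_diagram: "k < r \<Longrightarrow> box_of la T k \<in> young_diagram la"
  using tableau unfolding box_of_def bij_betw_def by (intro inv_into_into) auto

lemma tableau_box_of: "k < r \<Longrightarrow> T (box_of la T k) = k"
  using tableau unfolding box_of_def bij_betw_def by (intro f_inv_into_f) auto

lemma box_of_tableau: "p \<in> young_diagram la \<Longrightarrow> box_of la T (T p) = p"
  using tableau unfolding box_of_def bij_betw_def by simp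

lemma tableau_less: "p \<in> young_diagram la \<Longrightarrow> T p < r"
  using tableau by (auto simp: bij_betw_def)

lemma tableau_comp_permutes: "\<pi> permutes {0..<r} \<Longrightarrow> tableau la r (\<pi> \<circ> T)"
  unfolding tableau_def using bij_betw_trans[OF tableau permutes_imp_bij] .

lemma box_of_comp_permutes:
  assumes \<pi>: "\<pi> permutes {0..<r}" and k: "k < r"
  shows "box_of la (\<pi> \<circ> T) k = box_of la T (inv \<pi> k)"
proof -
  have k': "inv \<pi> k < r" using k permutes_less_iff[OF permutes_inv[OF \<pi>]] by blast
  have "inj_on (\<pi> \<circ> T) (young_diagram la)"
    using tableau_comp_permutes[OF \<pi>] by (simp add: tableau_def bij_betw_imp_inj_on)
  then show ?thesis unfolding box_of_def[of la "\<pi> \<circ> T"]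
    using box_of_in_young_diagram[OF k'] tableau_box_of[OF k'] permutes_inverses(1)[OF \<pi>]
    by (intro inv_into_f_eq) auto
qed

lemma tabloid_of_eq: "tabloid_of la r T k = (if k < r then fst (box_of la T k) else 0)"
  by (simp add: tabloid_of_def box_of_def)

lemma tabloid_of_comp_permutes:
  assumes \<pi>: "\<pi> permutes {0..<r}"
  shows "tabloid_of la r (\<pi> \<circ> T) = tabloid_of la r T \<circ> inv \<pi>"
proof
  fix k
  have "tabloid_of la r (\<pi> \<circ> T) k = (if k < r then fst (box_of la (\<pi> \<circ> T) k) else 0)"
    by (simp add: tabloid_of_def box_of_def)
  then show "tabloid_of la r (\<pi> \<circ> T) k = (tabloid_of la r T \<circ> inv \<pi>) k"
    using box_of_comp_permutes[OF \<pi>] permutes_less_iff[OF permutes_inv[OF \<pi>], of k]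
    by (simp add: tabloid_of_eq)
qed

lemma tabloid_of_in_tabloids: "tabloid_of la r T \<in> tabloids la r"
  unfolding tabloids_def
proof (intro CollectI conjI allI impI)
  fix k :: nat
  show "r \<le> k \<Longrightarrow> tabloid_of la r T k = 0" by (simp add: tabloid_of_def)
  show "k < r \<Longrightarrow> tabloid_of la r T k < length la"
    using box_of_in_young_diagram[of k] by (auto simp: tabloid_of_eq young_diagram_def)
next
  fix i assume i: "i < length la"
  have "{k. k < r \<and> tabloid_of la r T k = i} = T ` Pair i ` {..<la ! i}"
  proof (intro equalityI subsetI)
    fix k assume "k \<in> {k. k < r \<and> tabloid_of la r T k = i}"
    then have k: "k < r" and row: "fst (box_of la T k) = i" by (auto simp: tabloid_of_eq)
    obtain j where "box_of la T k = (i, j)" using row by (cases "box_of la T k") auto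
    then show "k \<in> T ` Pair i ` {..<la ! i}"
      using box_of_in_young_diagram[OF k] tableau_box_of[OF k]
      by (force simp: young_diagram_def)
  next
    fix k assume "k \<in> T ` Pair i ` {..<la ! i}"
    then obtain j where j: "j < la ! i" "k = T (i, j)" by auto
    then have "(i, j) \<in> young_diagram la" using i by (simp add: young_diagram_def)
    then show "k \<in> {k. k < r \<and> tabloid_of la r T k = i}"
      using j tableau_less box_of_tableau by (simp add: tabloid_of_eq)
  qed
  moreover have "inj_on T (Pair i ` {..<la ! i})"
    using bij_betw_imp_inj_on[OF tableau] by (rule inj_on_subset) (use i in \<open>auto simp: young_diagram_def\<close>)
  ultimately show "card {k. k < r \<and> tabloid_of la r T k = i} = la ! i"
    by (simp add: card_image inj_on_def)
qed

lemma column_group_iff: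
  "\<sigma> \<in> column_group la r T \<longleftrightarrow>
     \<sigma> permutes {0..<r} \<and> (\<forall>k<r. snd (box_of la T (\<sigma> k)) = snd (box_of la T k))"
proof (intro iffI conjI allI impI; (elim conjE)?)
  assume \<sigma>: "\<sigma> \<in> column_group la r T"
  then show "\<sigma> permutes {0..<r}" by (simp add: column_group_def)
  fix k assume k: "k < r"
  obtain i j where ij: "box_of la T k = (i, j)" by fastforce
  then have "(i, j) \<in> young_diagram la" using box_of_in_young_diagram[OF k] by simp
  then obtain i' where "(i', j) \<in> young_diagram la" "\<sigma> (T (i, j)) = T (i', j)"
    using \<sigma> unfolding column_group_def by blast
  then show "snd (box_of la T (\<sigma> k)) = snd (box_of la T k)"
    using ij tableau_box_of[OF k] box_of_tableau by simp
next
  assume \<sigma>: "\<sigma> permutes {0..<r}" and col: "\<forall>k<r. snd (box_of la T (\<sigma> k)) = snd (box_of la T k)"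
  show "\<sigma> \<in> column_group la r T" unfolding column_group_def
  proof (intro CollectI conjI \<sigma> allI impI)
    fix i j assume ij: "(i, j) \<in> young_diagram la"
    have k: "\<sigma> (T (i, j)) < r" using tableau_less[OF ij] permutes_less_iff[OF \<sigma>] by blast
    obtain i' j' where q: "box_of la T (\<sigma> (T (i, j))) = (i', j')" by fastforce
    have "j' = j" using col tableau_less[OF ij] q box_of_tableau[OF ij] by (metis snd_conv)
    then show "\<exists>i'. (i', j) \<in> young_diagram la \<and> \<sigma> (T (i, j)) = T (i', j)"
      using box_of_in_young_diagram[OF k] tableau_box_of[OF k] q by (intro exI[of _ i']) auto
  qed
qed

end

lemma finite_tabloids: "finite (tabloids la r)"
proof (rule finite_subset)
  show "tabloids la r \<subseteq> (\<lambda>f k. if k < r then f k else 0) ` ({0..<r} \<rightarrow>\<^sub>E {..<length la})"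
  proof
    fix t assume t: "t \<in> tabloids la r"
    then have "t = (\<lambda>k. if k < r then restrict t {0..<r} k else 0)"
      by (auto simp: tabloids_def fun_eq_iff)
    moreover have "restrict t {0..<r} \<in> {0..<r} \<rightarrow>\<^sub>E {..<length la}"
      using t by (auto simp: tabloids_def)
    ultimately show "t \<in> (\<lambda>f k. if k < r then f k else 0) ` ({0..<r} \<rightarrow>\<^sub>E {..<length la})" by blast
  qed
qed (intro finite_imageI finite_PiE; simp)

section \<open>The column antisymmetriser\<close>

lemma sum_eq_0_if_reindex_negates:
  fixes g :: "'b \<Rightarrow> 'a::linordered_ab_group_add"
  assumes "bij_betw h A A" and "\<And>x. x \<in> A \<Longrightarrow> g (h x) = - g x"
  shows "sum g A = 0"
proof -
  have "sum g A = (\<Sum>x\<in>A. g (h x))" by (rule sum.reindex_bij_betw[OF assms(1), symmetric])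
  also have "\<dots> = - sum g A" using assms(2) by (simp add: sum_negf)
  finally show ?thesis by simp
qed

lemma comp_transpose_eq_iff:
  assumes "t a = t b"
  shows "X \<circ> transpose a b = t \<longleftrightarrow> X = t"
proof -
  have "t \<circ> transpose a b = t" using assms by (auto simp: transpose_def fun_eq_iff)
  then show ?thesis by (metis comp_assoc comp_id transpose_comp_involutory)
qed

definition tabloid_vec :: "(nat \<Rightarrow> nat) \<Rightarrow> (nat \<Rightarrow> nat) \<Rightarrow> int" where
  "tabloid_vec t = (\<lambda>s. if s = t then 1 else 0)"

definition col_antisym :: "nat list \<Rightarrow> nat \<Rightarrow> ((nat \<times> nat) \<Rightarrow> nat)
    \<Rightarrow> ((nat \<Rightarrow> nat) \<Rightarrow> int) \<Rightarrow> ((nat \<Rightarrow> nat) \<Rightarrow> int)" where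
  "col_antisym la r T u = (\<lambda>s. \<Sum>\<pi>\<in>column_group la r T. sign \<pi> * perm_vec \<pi> u s)"

definition tabloid_inner :: "nat list \<Rightarrow> nat \<Rightarrow> ((nat \<Rightarrow> nat) \<Rightarrow> int) \<Rightarrow> ((nat \<Rightarrow> nat) \<Rightarrow> int) \<Rightarrow> int" where
  "tabloid_inner la r u v = (\<Sum>s\<in>tabloids la r. u s * v s)"

lemma col_antisym_sum:
  "col_antisym la r T (\<lambda>s. \<Sum>i\<in>I. c i * v i s) = (\<lambda>s. \<Sum>i\<in>I. c i * col_antisym la r T (v i) s)"
  unfolding col_antisym_def perm_vec_def
  by (simp add: sum_distrib_left sum.swap[of _ I] mult.left_commute)

lemma tabloid_vec_expansion:
  assumes "\<And>s. s \<notin> tabloids la r \<Longrightarrow> u s = 0"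
  shows "u = (\<lambda>s. \<Sum>t\<in>tabloids la r. u t * tabloid_vec t s)"
proof
  fix s
  have "(\<Sum>t\<in>tabloids la r. u t * tabloid_vec t s) = (if s \<in> tabloids la r then u s else 0)"
    by (simp add: tabloid_vec_def finite_tabloids if_distrib[of "\<lambda>x. _ * x"] sum.delta' cong: if_cong)
  then show "u s = (\<Sum>t\<in>tabloids la r. u t * tabloid_vec t s)" using assms by simp
qed

context tableau
begin

abbreviation "C \<equiv> column_group la r T"
abbreviation "col k \<equiv> snd (box_of la T k)"

lemma column_group_permutes: "\<pi> \<in> C \<Longrightarrow> \<pi> permutes {0..<r}"
  by (simp add: column_group_def)

lemma column_group_permutation: "\<pi> \<in> C \<Longrightarrow> permutation \<pi>"
  using column_group_permutes permutation_permutes by blast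

lemma column_group_col: "\<pi> \<in> C \<Longrightarrow> k < r \<Longrightarrow> col (\<pi> k) = col k"
  using column_group_iff by blast

lemma column_group_comp: "\<pi> \<in> C \<Longrightarrow> \<rho> \<in> C \<Longrightarrow> \<pi> \<circ> \<rho> \<in> C"
  unfolding column_group_iff using permutes_compose permutes_less_iff by fastforce

lemma column_group_inv:
  assumes \<pi>: "\<pi> \<in> C"
  shows "inv \<pi> \<in> C"
proof -
  have p: "\<pi> permutes {0..<r}" using \<pi> by (rule column_group_permutes)
  have "col (inv \<pi> k) = col k" if "k < r" for k
    using column_group_col[OF \<pi>, of "inv \<pi> k"] that permutes_less_iff[OF permutes_inv[OF p]]
      permutes_inverses(1)[OF p] by simp
  then show ?thesis using permutes_inv[OF p] by (simp add: column_group_iff)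
qed

lemma finite_column_group: "finite C"
  by (rule finite_subset[OF _ finite_permutations[of "{0..<r}"]]) (auto dest: column_group_permutes)

lemma bij_betw_comp_left_column_group: "\<tau> \<in> C \<Longrightarrow> bij_betw ((\<circ>) \<tau>) C C"
  by (rule bij_betw_byWitness[where f'="(\<circ>) (inv \<tau>)"])
    (auto simp: o_assoc permutes_inv_o[OF column_group_permutes] column_group_comp column_group_inv)

lemma bij_betw_comp_right_column_group: "\<tau> \<in> C \<Longrightarrow> bij_betw (\<lambda>\<pi>. \<pi> \<circ> \<tau>) C C"
  by (rule bij_betw_byWitness[where f'="\<lambda>\<pi>. \<pi> \<circ> inv \<tau>"])
    (auto simp: o_assoc[symmetric] permutes_inv_o[OF column_group_permutes] column_group_comp column_group_inv)

lemma transpose_in_column_group: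
  assumes "a < r" "b < r" "col a = col b"
  shows "transpose a b \<in> C"
proof -
  have "transpose a b permutes {0..<r}" using assms by (intro permutes_swap_id) auto
  moreover have "col (transpose a b k) = col k" for k
    using assms by (cases "k = a"; cases "k = b") auto
  ultimately show ?thesis by (simp add: column_group_iff)
qed

lemma polytabloid_eq_0_if_repeated_row:
  assumes "a < r" "b < r" "a \<noteq> b" "col a = col b" and "t a = t b"
  shows "polytabloid la r T t = 0"
proof -
  let ?\<tau> = "transpose a b"
  have \<tau>: "?\<tau> \<in> C" using assms by (intro transpose_in_column_group)
  show ?thesis unfolding polytabloid_def
  proof (rule sum_eq_0_if_reindex_negates[OF bij_betw_comp_left_column_group[OF \<tau>]])
    fix \<pi> assume \<pi>: "\<pi> \<in> C"
    have "tabloid_of la r (?\<tau> \<circ> \<pi> \<circ> T) = tabloid_of la r (\<pi> \<circ> T) \<circ> ?\<tau>"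
      using tableau.tabloid_of_comp_permutes[OF tableau_comp_permutes[OF column_group_permutes[OF \<pi>]]
          column_group_permutes[OF \<tau>]]
      by (simp add: comp_assoc)
    moreover have "sign (?\<tau> \<circ> \<pi>) = - sign \<pi>"
      using sign_compose[OF column_group_permutation[OF \<tau>] column_group_permutation[OF \<pi>]] assms(3)
      by (simp add: sign_swap_id)
    ultimately show "(if tabloid_of la r ((?\<tau> \<circ> \<pi>) \<circ> T) = t then sign (?\<tau> \<circ> \<pi>) else 0) =
        - (if tabloid_of la r (\<pi> \<circ> T) = t then sign \<pi> else 0)"
      by (simp add: comp_transpose_eq_iff[where t=t, OF assms(5)])
  qed
qed

lemma col_antisym_tabloid_vec_eq_0_if_repeated_row:
  assumes "a < r" "b < r" "a \<noteq> b" "col a = col b" and "t a = t b"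
  shows "col_antisym la r T (tabloid_vec t) = (\<lambda>_. 0)"
proof
  fix s
  let ?\<tau> = "transpose a b"
  have \<tau>: "?\<tau> \<in> C" using assms by (intro transpose_in_column_group)
  show "col_antisym la r T (tabloid_vec t) s = 0" unfolding col_antisym_def
  proof (rule sum_eq_0_if_reindex_negates[OF bij_betw_comp_right_column_group[OF \<tau>]])
    fix \<pi> assume \<pi>: "\<pi> \<in> C"
    have "sign (\<pi> \<circ> ?\<tau>) = - sign \<pi>"
      using sign_compose[OF column_group_permutation[OF \<pi>] column_group_permutation[OF \<tau>]] assms(3)
      by (simp add: sign_swap_id)
    then show "sign (\<pi> \<circ> ?\<tau>) * perm_vec (\<pi> \<circ> ?\<tau>) (tabloid_vec t) s =
        - (sign \<pi> * perm_vec \<pi> (tabloid_vec t) s)"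
      by (simp add: perm_vec_def tabloid_vec_def comp_transpose_eq_iff[where t=t, OF assms(5)] flip: comp_assoc)
  qed
qed

lemma column_group_eq_if_tabloid_eq:
  assumes \<pi>: "\<pi> \<in> C" and \<pi>0: "\<pi>0 \<in> C"
    and eq: "tabloid_of la r (\<pi> \<circ> T) = tabloid_of la r (\<pi>0 \<circ> T)"
  shows "\<pi> = \<pi>0"
proof
  fix m
  have p: "\<pi> permutes {0..<r}" and p0: "\<pi>0 permutes {0..<r}"
    using \<pi> \<pi>0 by (simp_all add: column_group_permutes)
  show "\<pi> m = \<pi>0 m"
  proof (cases "m < r")
    case True
    let ?k = "inv \<pi> (\<pi>0 m)"
    have m0: "\<pi>0 m < r" using True permutes_less_iff[OF p0] by blast
    then have k: "?k < r" using permutes_less_iff[OF permutes_inv[OF p]] by blast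
    have "fst (box_of la T ?k) = fst (box_of la T m)"
      using fun_cong[OF eq, of "\<pi>0 m"] m0 k True
      by (simp add: tabloid_of_comp_permutes[OF p] tabloid_of_comp_permutes[OF p0]
          tabloid_of_eq permutes_inverses(2)[OF p0])
    moreover have "col ?k = col m"
      using column_group_col[OF column_group_inv[OF \<pi>] m0] column_group_col[OF \<pi>0 True] by simp
    ultimately have "box_of la T ?k = box_of la T m" by (simp add: prod_eq_iff)
    then have "?k = m" using tableau_box_of k True by metis
    then show ?thesis using permutes_inverses(1)[OF p] by metis
  qed (simp add: permutes_not_in[OF p] permutes_not_in[OF p0])
qed

lemma polytabloid_column_orbit:
  assumes "\<pi>0 \<in> C"
  shows "polytabloid la r T (tabloid_of la r (\<pi>0 \<circ> T)) = sign \<pi>0"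
proof -
  have "polytabloid la r T (tabloid_of la r (\<pi>0 \<circ> T)) = (\<Sum>\<pi>\<in>C. if \<pi> = \<pi>0 then sign \<pi> else 0)"
    unfolding polytabloid_def using column_group_eq_if_tabloid_eq assms by (intro sum.cong) auto
  also have "\<dots> = sign \<pi>0" using assms finite_column_group by simp
  finally show ?thesis .
qed

lemma col_antisym_tabloid_vec_column_orbit:
  assumes \<pi>0: "\<pi>0 \<in> C"
  shows "col_antisym la r T (tabloid_vec (tabloid_of la r (\<pi>0 \<circ> T))) =
    (\<lambda>s. sign \<pi>0 * polytabloid la r T s)"
proof
  fix s
  let ?t = "tabloid_of la r (\<pi>0 \<circ> T)"
  define h where "h \<rho> = sign (\<rho> \<circ> inv \<pi>0) * tabloid_vec (tabloid_of la r (\<rho> \<circ> T)) s" for \<rho>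
  have "sign \<pi> * perm_vec \<pi> (tabloid_vec ?t) s = h (\<pi> \<circ> \<pi>0)" if \<pi>: "\<pi> \<in> C" for \<pi>
  proof -
    have p: "\<pi> permutes {0..<r}" using \<pi> by (rule column_group_permutes)
    have "tabloid_of la r ((\<pi> \<circ> \<pi>0) \<circ> T) = ?t \<circ> inv \<pi>"
      using tableau.tabloid_of_comp_permutes[OF tableau_comp_permutes[OF column_group_permutes[OF \<pi>0]] p]
      by (simp add: comp_assoc)
    moreover have "s \<circ> \<pi> = ?t \<longleftrightarrow> s = ?t \<circ> inv \<pi>"
      by (auto simp: fun_eq_iff permutes_inverses[OF p] dest: spec[of _ "inv \<pi> _"])
    moreover have "\<pi> \<circ> \<pi>0 \<circ> inv \<pi>0 = \<pi>"
      by (simp add: comp_assoc permutes_inv_o[OF column_group_permutes[OF \<pi>0]])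
    ultimately show ?thesis by (simp add: h_def perm_vec_def tabloid_vec_def eq_commute[of s])
  qed
  then have "col_antisym la r T (tabloid_vec ?t) s = (\<Sum>\<pi>\<in>C. h (\<pi> \<circ> \<pi>0))"
    unfolding col_antisym_def by (intro sum.cong) auto
  also have "\<dots> = sum h C" by (rule sum.reindex_bij_betw[OF bij_betw_comp_right_column_group[OF \<pi>0]])
  also have "\<dots> = (\<Sum>\<rho>\<in>C. sign \<pi>0 * (if tabloid_of la r (\<rho> \<circ> T) = s then sign \<rho> else 0))"
  proof (intro sum.cong refl)
    fix \<rho> assume "\<rho> \<in> C"
    then have "sign (\<rho> \<circ> inv \<pi>0) = sign \<rho> * sign \<pi>0"
      using sign_compose[OF column_group_permutation column_group_permutation[OF column_group_inv[OF \<pi>0]]]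
        sign_inverse[OF column_group_permutation[OF \<pi>0]] by simp
    then show "h \<rho> = sign \<pi>0 * (if tabloid_of la r (\<rho> \<circ> T) = s then sign \<rho> else 0)"
      by (simp add: h_def tabloid_vec_def)
  qed
  also have "\<dots> = sign \<pi>0 * polytabloid la r T s"
    by (simp add: polytabloid_def sum_distrib_left)
  finally show "col_antisym la r T (tabloid_vec ?t) s = sign \<pi>0 * polytabloid la r T s" .
qed

text \<open>In every column of T the rows assigned by t are distinct, so their sum is at least
  the sum of the row indices of that column. Summed over all columns both sides equal
  \<Sum>i. i * \<lambda>_i, hence equality holds column by column, which forces the rows
  assigned to a column of length c to be exactly {..<c}.\<close>
lemma tabloid_row_in_column:
  assumes part: "is_partition la r" and t: "t \<in> tabloids la r"
    and distinct_rows: "\<And>a b. a < r \<Longrightarrow> b < r \<Longrightarrow> a \<noteq> b \<Longrightarrow> col a = col b \<Longrightarrow> t a \<noteq> t b"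
    and k: "k < r"
  shows "(t k, col k) \<in> young_diagram la"
proof -
  let ?W = "snd ` young_diagram la"
  define c where "c j = card (column_rows la j)" for j
  define h where "h j i = t (T (i, j))" for j i
  have rows: "column_rows la j = {..<c j}" for j
    using column_rows_eq_lessThan part unfolding c_def is_partition_def by blast
  have inj: "inj_on (h j) {..<c j}" for j
  proof (rule inj_onI, rule ccontr)
    fix i i' assume "i \<in> {..<c j}" "i' \<in> {..<c j}" "h j i = h j i'" "i \<noteq> i'"
    then have "(i, j) \<in> young_diagram la" "(i', j) \<in> young_diagram la" "h j i = h j i'" "i \<noteq> i'"
      using rows by (auto simp: column_rows_def)
    moreover from this have "T (i, j) \<noteq> T (i', j)" using box_of_tableau by (metis prod.inject)
    ultimately show False using distinct_rows[of "T (i, j)" "T (i', j)"] tableau_less box_of_tableau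
      by (simp add: h_def)
  qed
  have "(\<Sum>j\<in>?W. \<Sum>i<c j. i) = (\<Sum>p\<in>young_diagram la. fst p)"
    using sum_young_diagram_by_columns[where g=fst] by (simp add: rows)
  also have "\<dots> = (\<Sum>k<r. t k)" by (simp add: sum_fst_young_diagram sum_tabloid[OF t])
  also have "\<dots> = (\<Sum>p\<in>young_diagram la. t (T p))"
    using sum.reindex_bij_betw[OF tableau, of t] by (simp add: atLeast0LessThan)
  also have "\<dots> = (\<Sum>j\<in>?W. \<Sum>i<c j. h j i)"
    using sum_young_diagram_by_columns[where g="\<lambda>p. t (T p)"] by (simp add: rows h_def)
  finally have total: "(\<Sum>j\<in>?W. \<Sum>i<c j. i) = (\<Sum>j\<in>?W. \<Sum>i<c j. h j i)" .
  have image: "h j ` {..<c j} = {..<c j}" if "j \<in> ?W" for j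
  proof (rule image_eq_lessThan_if_sum_eq[OF inj])
    show "(\<Sum>i<c j. h j i) = (\<Sum>i<c j. i)"
      using sum_mono_inv[OF total sum_lessThan_le_sum_inj_on[OF inj] that] finite_young_diagram by simp
  qed
  obtain i j where ij: "box_of la T k = (i, j)" by fastforce
  then have "(i, j) \<in> young_diagram la" using box_of_in_young_diagram[OF k] by simp
  then have "j \<in> ?W" "i \<in> {..<c j}" using rows by (force simp: column_rows_def)+
  moreover have "t k = h j i" using tableau_box_of[OF k] ij by (simp add: h_def)
  ultimately show ?thesis using image ij rows by (force simp: column_rows_def)
qed

lemma tabloid_in_column_orbit:
  assumes part: "is_partition la r" and t: "t \<in> tabloids la r"
    and distinct_rows: "\<And>a b. a < r \<Longrightarrow> b < r \<Longrightarrow> a \<noteq> b \<Longrightarrow> col a = col b \<Longrightarrow> t a \<noteq> t b"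
  shows "\<exists>\<pi>\<in>C. t = tabloid_of la r (\<pi> \<circ> T)"
proof -
  define g where "g k = (t k, col k)" for k
  have g: "g k \<in> young_diagram la" if "k < r" for k
    unfolding g_def by (rule tabloid_row_in_column[OF assms that])
  have inj: "inj_on g {0..<r}"
  proof (rule inj_onI)
    fix a b assume "a \<in> {0..<r}" "b \<in> {0..<r}" "g a = g b"
    then show "a = b" using distinct_rows[of a b] by (auto simp: g_def)
  qed
  moreover have "g ` {0..<r} = young_diagram la"
  proof (rule card_subset_eq[OF finite_young_diagram])
    show "g ` {0..<r} \<subseteq> young_diagram la" using g by auto
    show "card (g ` {0..<r}) = card (young_diagram la)"
      using card_image[OF inj] bij_betw_same_card[OF tableau] by simp
  qed
  ultimately have "bij_betw (T \<circ> g) {0..<r} {0..<r}"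
    using bij_betw_trans[OF _ tableau, of g "{0..<r}"] by (simp add: bij_betw_def)
  define \<rho> where "\<rho> k = (if k < r then T (g k) else k)" for k
  have "bij_betw \<rho> {0..<r} {0..<r}"
    using \<open>bij_betw (T \<circ> g) {0..<r} {0..<r}\<close> by (rule bij_betw_cong[THEN iffD1, rotated]) (simp add: \<rho>_def)
  then have \<rho>: "\<rho> permutes {0..<r}" by (rule bij_imp_permutes) (simp add: \<rho>_def)
  have box: "box_of la T (\<rho> k) = g k" if "k < r" for k
    using box_of_tableau[OF g[OF that]] that by (simp add: \<rho>_def)
  then have "\<rho> \<in> C" using \<rho> by (simp add: column_group_iff g_def)
  moreover have "t = tabloid_of la r (inv \<rho> \<circ> T)"
  proof
    fix k
    show "t k = tabloid_of la r (inv \<rho> \<circ> T) k"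
      using t box[of k] permutes_less_iff[OF \<rho>, of k]
      by (simp add: tabloid_of_comp_permutes[OF permutes_inv[OF \<rho>]] permutes_inv_inv[OF \<rho>]
          tabloid_of_eq g_def tabloids_def)
  qed
  ultimately show ?thesis using column_group_inv by blast
qed

lemma col_antisym_tabloid_vec:
  assumes "is_partition la r" and "t \<in> tabloids la r"
  shows "col_antisym la r T (tabloid_vec t) = (\<lambda>s. polytabloid la r T t * polytabloid la r T s)"
proof (cases "\<exists>a b. a < r \<and> b < r \<and> a \<noteq> b \<and> col a = col b \<and> t a = t b")
  case True
  then obtain a b where "a < r" "b < r" "a \<noteq> b" "col a = col b" "t a = t b" by blast
  then show ?thesis
    using polytabloid_eq_0_if_repeated_row col_antisym_tabloid_vec_eq_0_if_repeated_row by simp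
next
  case False
  then obtain \<pi>0 where "\<pi>0 \<in> C" "t = tabloid_of la r (\<pi>0 \<circ> T)"
    using tabloid_in_column_orbit[OF assms] by blast
  then show ?thesis
    using polytabloid_column_orbit col_antisym_tabloid_vec_column_orbit by simp
qed

lemma col_antisym_eq_tabloid_inner:
  assumes "is_partition la r" and "\<And>s. s \<notin> tabloids la r \<Longrightarrow> u s = 0"
  shows "col_antisym la r T u = (\<lambda>s. tabloid_inner la r u (polytabloid la r T) * polytabloid la r T s)"
proof -
  have "col_antisym la r T u = col_antisym la r T (\<lambda>s. \<Sum>t\<in>tabloids la r. u t * tabloid_vec t s)"
    using tabloid_vec_expansion[OF assms(2)] by simp
  also have "\<dots> = (\<lambda>s. \<Sum>t\<in>tabloids la r. u t * (polytabloid la r T t * polytabloid la r T s))"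
    by (simp add: col_antisym_sum col_antisym_tabloid_vec[OF assms(1)])
  finally show ?thesis by (simp add: tabloid_inner_def sum_distrib_right mult.assoc)
qed

end

section \<open>The Specht module and its homomorphisms\<close>

lemma conj_in_column_group:
  assumes \<pi>: "\<pi> permutes {0..<r}" and \<rho>: "\<rho> \<in> column_group la r T"
  shows "\<pi> \<circ> \<rho> \<circ> inv \<pi> \<in> column_group la r (\<pi> \<circ> T)"
  unfolding column_group_def
proof (intro CollectI conjI allI impI)
  show "\<pi> \<circ> \<rho> \<circ> inv \<pi> permutes {0..<r}"
    using \<rho> by (auto simp: column_group_def intro!: permutes_compose permutes_inv \<pi>)
  fix i j assume "(i, j) \<in> young_diagram la"
  then obtain i' where "(i', j) \<in> young_diagram la" "\<rho> (T (i, j)) = T (i', j)"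
    using \<rho> unfolding column_group_def by blast
  then show "\<exists>i'. (i', j) \<in> young_diagram la \<and> (\<pi> \<circ> \<rho> \<circ> inv \<pi>) ((\<pi> \<circ> T) (i, j)) = (\<pi> \<circ> T) (i', j)"
    by (auto simp: permutes_inverses(2)[OF \<pi>])
qed

lemma bij_betw_conj_column_group:
  assumes \<pi>: "\<pi> permutes {0..<r}"
  shows "bij_betw (\<lambda>\<rho>. \<pi> \<circ> \<rho> \<circ> inv \<pi>) (column_group la r T) (column_group la r (\<pi> \<circ> T))"
proof (rule bij_betw_byWitness[where f'="\<lambda>\<sigma>. inv \<pi> \<circ> \<sigma> \<circ> \<pi>"])
  have inv_conj: "inv \<pi> \<circ> \<sigma> \<circ> \<pi> \<in> column_group la r T" if "\<sigma> \<in> column_group la r (\<pi> \<circ> T)" for \<sigma>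
    using conj_in_column_group[OF permutes_inv[OF \<pi>] that]
    by (simp add: permutes_inv_inv[OF \<pi>] comp_assoc[symmetric] permutes_inv_o[OF \<pi>])
  show "(\<lambda>\<sigma>. inv \<pi> \<circ> \<sigma> \<circ> \<pi>) ` column_group la r (\<pi> \<circ> T) \<subseteq> column_group la r T"
    using inv_conj by blast
  show "(\<lambda>\<rho>. \<pi> \<circ> \<rho> \<circ> inv \<pi>) ` column_group la r T \<subseteq> column_group la r (\<pi> \<circ> T)"
    using conj_in_column_group[OF \<pi>] by blast
qed (auto simp: fun_eq_iff permutes_inverses[OF \<pi>])

text \<open>Tableaux are arbitrary functions outside the Young diagram.\<close>
lemma polytabloid_cong:
  assumes "\<And>p. p \<in> young_diagram la \<Longrightarrow> U p = U' p"
  shows "polytabloid la r U = polytabloid la r U'"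
proof -
  have "column_group la r U = column_group la r U'"
    unfolding column_group_def using assms by (intro Collect_cong) (metis (no_types, lifting))
  moreover have "inv_into (young_diagram la) (\<sigma> \<circ> U) = inv_into (young_diagram la) (\<sigma> \<circ> U')" for \<sigma>
    unfolding inv_into_def using assms by (auto intro!: arg_cong[where f=Eps] simp: fun_eq_iff)
  then have "tabloid_of la r (\<sigma> \<circ> U) = tabloid_of la r (\<sigma> \<circ> U')" for \<sigma>
    unfolding tabloid_of_def by metis
  ultimately show ?thesis by (simp add: polytabloid_def)
qed

context tableau
begin

lemma perm_vec_polytabloid:
  assumes \<pi>: "\<pi> permutes {0..<r}"
  shows "perm_vec \<pi> (polytabloid la r T) = polytabloid la r (\<pi> \<circ> T)"
proof
  fix s
  define g where "g \<sigma> = (if tabloid_of la r (\<sigma> \<circ> (\<pi> \<circ> T)) = s then sign \<sigma> else 0)" for \<sigma>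
  have "polytabloid la r (\<pi> \<circ> T) s = (\<Sum>\<rho>\<in>C. g (\<pi> \<circ> \<rho> \<circ> inv \<pi>))"
    using sum.reindex_bij_betw[OF bij_betw_conj_column_group[OF \<pi>], of g] by (simp add: polytabloid_def g_def)
  also have "\<dots> = (\<Sum>\<rho>\<in>C. if tabloid_of la r (\<rho> \<circ> T) = s \<circ> \<pi> then sign \<rho> else 0)"
  proof (intro sum.cong refl)
    fix \<rho> assume \<rho>: "\<rho> \<in> C"
    have "\<pi> \<circ> \<rho> \<circ> inv \<pi> \<circ> (\<pi> \<circ> T) = \<pi> \<circ> (\<rho> \<circ> T)"
      by (simp add: fun_eq_iff permutes_inverses[OF \<pi>])
    moreover have "tabloid_of la r (\<pi> \<circ> (\<rho> \<circ> T)) = tabloid_of la r (\<rho> \<circ> T) \<circ> inv \<pi>"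
      by (rule tableau.tabloid_of_comp_permutes[OF tableau_comp_permutes[OF column_group_permutes[OF \<rho>]] \<pi>])
    moreover have "X \<circ> inv \<pi> = s \<longleftrightarrow> X = s \<circ> \<pi>" for X :: "nat \<Rightarrow> nat"
      by (auto simp: fun_eq_iff permutes_inverses[OF \<pi>] dest: spec[of _ "\<pi> _"])
    moreover have "sign (\<pi> \<circ> \<rho> \<circ> inv \<pi>) = sign \<rho>"
    proof -
      have p: "permutation \<pi>" "permutation (inv \<pi>)" "permutation \<rho>"
        using \<pi> permutes_inv[OF \<pi>] column_group_permutation[OF \<rho>] permutation_permutes by blast+
      then show ?thesis by (simp add: sign_compose permutation_compose sign_inverse)
    qed
    ultimately show "g (\<pi> \<circ> \<rho> \<circ> inv \<pi>) = (if tabloid_of la r (\<rho> \<circ> T) = s \<circ> \<pi> then sign \<rho> else 0)"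
      by (simp add: g_def)
  qed
  also have "\<dots> = perm_vec \<pi> (polytabloid la r T) s"
    by (simp add: perm_vec_def polytabloid_def)
  finally show "perm_vec \<pi> (polytabloid la r T) s = polytabloid la r (\<pi> \<circ> T) s" ..
qed

lemma polytabloid_vanishes_outside_tabloids:
  "s \<notin> tabloids la r \<Longrightarrow> polytabloid la r T s = 0"
  using tableau.tabloid_of_in_tabloids[OF tableau_comp_permutes[OF column_group_permutes]]
  unfolding polytabloid_def by (intro sum.neutral) auto

end

lemma polytabloid_conjugate:
  assumes T: "T \<in> tableaux la r" and T': "T' \<in> tableaux la r"
  shows "\<exists>\<pi>. \<pi> permutes {0..<r} \<and> polytabloid la r T' = perm_vec \<pi> (polytabloid la r T)"
proof -
  interpret tableau la r T using T by (simp add: tableau_def tableaux_def)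
  have T': "bij_betw T' (young_diagram la) {0..<r}" using T' by (simp add: tableaux_def)
  define \<pi> where "\<pi> k = (if k < r then T' (box_of la T k) else k)" for k
  have "bij_betw (box_of la T) {0..<r} (young_diagram la)"
    unfolding box_of_def by (rule bij_betw_inv_into[OF tableau])
  then have "bij_betw (T' \<circ> box_of la T) {0..<r} {0..<r}" using T' by (rule bij_betw_trans)
  then have "bij_betw \<pi> {0..<r} {0..<r}" by (rule bij_betw_cong[THEN iffD1, rotated]) (simp add: \<pi>_def)
  then have \<pi>: "\<pi> permutes {0..<r}" by (rule bij_imp_permutes) (simp add: \<pi>_def)
  have "polytabloid la r T' = polytabloid la r (\<pi> \<circ> T)"
    by (rule polytabloid_cong) (simp add: \<pi>_def tableau_less box_of_tableau)
  then show ?thesis using perm_vec_polytabloid[OF \<pi>] \<pi> by metis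
qed

lemma specht_I:
  "finite F \<Longrightarrow> F \<subseteq> tableaux la r \<Longrightarrow> (\<lambda>s. \<Sum>T\<in>F. c T * polytabloid la r T s) \<in> specht la r"
  unfolding specht_def by blast

lemma specht_E:
  assumes "v \<in> specht la r"
  obtains F c where "finite F" "F \<subseteq> tableaux la r" "v = (\<lambda>s. \<Sum>T\<in>F. c T * polytabloid la r T s)"
  using assms unfolding specht_def by blast

lemma specht_zero: "(\<lambda>_. 0) \<in> specht la r"
  using specht_I[of "{}" la r] by simp

lemma polytabloid_in_specht: "T \<in> tableaux la r \<Longrightarrow> polytabloid la r T \<in> specht la r"
  using specht_I[of "{T}" la r "\<lambda>_. 1"] by simp

lemma specht_add:
  assumes "x \<in> specht la r" and "y \<in> specht la r"
  shows "(\<lambda>s. x s + y s) \<in> specht la r"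
proof -
  obtain F1 c1 where F1: "finite F1" "F1 \<subseteq> tableaux la r" "x = (\<lambda>s. \<Sum>T\<in>F1. c1 T * polytabloid la r T s)"
    using assms(1) by (rule specht_E)
  obtain F2 c2 where F2: "finite F2" "F2 \<subseteq> tableaux la r" "y = (\<lambda>s. \<Sum>T\<in>F2. c2 T * polytabloid la r T s)"
    using assms(2) by (rule specht_E)
  let ?c = "\<lambda>T. (if T \<in> F1 then c1 T else 0) + (if T \<in> F2 then c2 T else 0)"
  have fin: "finite (F1 \<union> F2)" using F1 F2 by simp
  have "(\<Sum>T\<in>F1 \<union> F2. ?c T * polytabloid la r T s) =
      (\<Sum>T\<in>F1 \<union> F2. if T \<in> F1 then c1 T * polytabloid la r T s else 0) +
      (\<Sum>T\<in>F1 \<union> F2. if T \<in> F2 then c2 T * polytabloid la r T s else 0)" for s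
    by (simp add: sum.distrib[symmetric] distrib_right if_distrib[of "\<lambda>a. a * _"] cong: if_cong)
  also have "\<dots> s = x s + y s" for s
    using sum.inter_restrict[OF fin, of "\<lambda>T. c1 T * polytabloid la r T s" F1]
      sum.inter_restrict[OF fin, of "\<lambda>T. c2 T * polytabloid la r T s" F2] F1(3) F2(3)
    by (simp add: Un_Int_eq)
  finally have "(\<lambda>s. x s + y s) = (\<lambda>s. \<Sum>T\<in>F1 \<union> F2. ?c T * polytabloid la r T s)" by simp
  then show ?thesis using specht_I[OF fin] F1(2) F2(2) by simp
qed

lemma specht_scale:
  assumes "x \<in> specht la r"
  shows "(\<lambda>s. a * x s) \<in> specht la r"
proof -
  obtain F c where F: "finite F" "F \<subseteq> tableaux la r" "x = (\<lambda>s. \<Sum>T\<in>F. c T * polytabloid la r T s)"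
    using assms by (rule specht_E)
  then have "(\<lambda>s. a * x s) = (\<lambda>s. \<Sum>T\<in>F. (a * c T) * polytabloid la r T s)"
    by (simp add: sum_distrib_left mult.assoc)
  then show ?thesis using specht_I[OF F(1,2)] by simp
qed

lemma specht_diff: "x \<in> specht la r \<Longrightarrow> y \<in> specht la r \<Longrightarrow> (\<lambda>s. x s - y s) \<in> specht la r"
  using specht_add[OF _ specht_scale, of x la r y "- 1"] by simp

lemma specht_sum:
  "finite I \<Longrightarrow> (\<And>i. i \<in> I \<Longrightarrow> v i \<in> specht la r) \<Longrightarrow> (\<lambda>s. \<Sum>i\<in>I. v i s) \<in> specht la r"
  by (induction I rule: finite_induct) (simp_all add: specht_zero specht_add)

lemma perm_vec_in_specht:
  assumes \<pi>: "\<pi> permutes {0..<r}" and "x \<in> specht la r"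
  shows "perm_vec \<pi> x \<in> specht la r"
proof -
  obtain F c where F: "finite F" "F \<subseteq> tableaux la r" "x = (\<lambda>s. \<Sum>T\<in>F. c T * polytabloid la r T s)"
    using assms(2) by (rule specht_E)
  have tab: "tableau la r T" if "T \<in> F" for T
    using F(2) that by (auto simp: tableau_def tableaux_def)
  have "perm_vec \<pi> x = (\<lambda>s. \<Sum>T\<in>F. c T * perm_vec \<pi> (polytabloid la r T) s)"
    by (simp add: F(3) perm_vec_def)
  also have "\<dots> = (\<lambda>s. \<Sum>T\<in>F. c T * polytabloid la r (\<pi> \<circ> T) s)"
    using tableau.perm_vec_polytabloid[OF tab \<pi>] by simp
  finally show ?thesis
    using tableau.tableau_comp_permutes[OF tab \<pi>]
    by (auto simp: tableau_def tableaux_def intro!: specht_sum specht_scale polytabloid_in_specht F(1))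
qed

lemma specht_vanishes_outside_tabloids:
  assumes "v \<in> specht la r" and "s \<notin> tabloids la r"
  shows "v s = 0"
proof -
  obtain F c where F: "F \<subseteq> tableaux la r" "v = (\<lambda>s. \<Sum>T\<in>F. c T * polytabloid la r T s)"
    using assms(1) by (rule specht_E)
  have "polytabloid la r T s = 0" if "T \<in> F" for T
    using F(1) that assms(2)
    by (intro tableau.polytabloid_vanishes_outside_tabloids) (auto simp: tableau_def tableaux_def)
  then show ?thesis using F(2) by simp
qed

lemma specht_exists_tabloid_inner_ne_0:
  assumes z: "z \<in> specht la r" and "z \<noteq> (\<lambda>_. 0)"
  shows "\<exists>T\<in>tableaux la r. tabloid_inner la r z (polytabloid la r T) \<noteq> 0"
proof -
  obtain F c where F: "finite F" "F \<subseteq> tableaux la r" "z = (\<lambda>s. \<Sum>T\<in>F. c T * polytabloid la r T s)"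
    using z by (rule specht_E)
  obtain s0 where "z s0 \<noteq> 0" using assms(2) by auto
  then have s0: "s0 \<in> tabloids la r" "0 < z s0 * z s0"
    using specht_vanishes_outside_tabloids[OF z] by (blast, simp add: zero_less_mult_iff, arith)
  have "0 < tabloid_inner la r z z"
    unfolding tabloid_inner_def
    using member_le_sum[OF s0(1), of "\<lambda>s. z s * z s"] s0(2) finite_tabloids by fastforce
  also have "tabloid_inner la r z z = (\<Sum>T\<in>F. c T * tabloid_inner la r z (polytabloid la r T))"
    unfolding tabloid_inner_def
    by (subst (2) F(3)) (simp add: sum_distrib_left sum_distrib_right sum.swap[of _ F] mult_ac)
  finally have "(\<Sum>T\<in>F. c T * tabloid_inner la r z (polytabloid la r T)) \<noteq> 0" by simp
  then obtain T where "T \<in> F" "c T * tabloid_inner la r z (polytabloid la r T) \<noteq> 0"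
    by (meson sum.neutral)
  then show ?thesis using F(2) by auto
qed

lemma ZS_module_act_zero:
  assumes "ZS_module r act" and "\<pi> permutes {0..<r}"
  shows "act \<pi> (0::'m::ab_group_add) = 0"
proof -
  have "act \<pi> (0 + 0) = act \<pi> 0 + act \<pi> 0" using assms unfolding ZS_module_def by blast
  then show ?thesis by simp
qed

locale specht_homomorphism =
  fixes la :: "nat list" and r :: nat
    and act :: "(nat \<Rightarrow> nat) \<Rightarrow> 'm::ab_group_add \<Rightarrow> 'm"
    and f :: "((nat \<Rightarrow> nat) \<Rightarrow> int) \<Rightarrow> 'm"
  assumes hom: "specht_hom la r act f"
begin

lemma hom_add: "x \<in> specht la r \<Longrightarrow> y \<in> specht la r \<Longrightarrow> f (\<lambda>s. x s + y s) = f x + f y"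
  using hom unfolding specht_hom_def by blast

lemma hom_perm_vec: "\<pi> permutes {0..<r} \<Longrightarrow> x \<in> specht la r \<Longrightarrow> f (perm_vec \<pi> x) = act \<pi> (f x)"
  using hom unfolding specht_hom_def by blast

lemma hom_zero: "f (\<lambda>_. 0) = 0"
  using hom_add[OF specht_zero specht_zero] by simp

lemma hom_diff:
  assumes "x \<in> specht la r" and "y \<in> specht la r"
  shows "f (\<lambda>s. x s - y s) = f x - f y"
  using hom_add[OF specht_diff[OF assms] assms(2)] by (simp add: eq_diff_eq)

lemma hom_sum:
  "finite I \<Longrightarrow> (\<And>i. i \<in> I \<Longrightarrow> v i \<in> specht la r) \<Longrightarrow> f (\<lambda>s. \<Sum>i\<in>I. v i s) = (\<Sum>i\<in>I. f (v i))"
proof (induction I rule: finite_induct)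
  case (insert i I)
  then show ?case using hom_add[OF _ specht_sum, of "v i" I v] by simp
qed (simp add: hom_zero)

lemma hom_scale:
  assumes x: "x \<in> specht la r"
  shows "f (\<lambda>s. a * x s) = zscale a (f x)"
proof (induction a rule: int_induct[where k=0])
  case (step1 i)
  have "f (\<lambda>s. (i + 1) * x s) = f (\<lambda>s. i * x s) + f x"
    using hom_add[OF specht_scale[OF x] x] by (simp add: distrib_right)
  with step1 show ?case by (simp add: zscale_add1_left)
next
  case (step2 i)
  have "f (\<lambda>s. (i - 1) * x s) = f (\<lambda>s. i * x s) - f x"
    using hom_diff[OF specht_scale[OF x] x] by (simp add: left_diff_distrib)
  with step2 show ?case by (simp add: zscale_diff1_left)
qed (simp add: hom_zero)

lemma hom_col_antisym:
  assumes "tableau la r T" and "z \<in> specht la r"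
  shows "f (col_antisym la r T z) = (\<Sum>\<pi>\<in>column_group la r T. zscale (sign \<pi>) (act \<pi> (f z)))"
proof -
  have perm: "\<pi> \<in> column_group la r T \<Longrightarrow> \<pi> permutes {0..<r}" for \<pi>
    using tableau.column_group_permutes[OF assms(1)] .
  have "f (col_antisym la r T z) = (\<Sum>\<pi>\<in>column_group la r T. f (\<lambda>s. sign \<pi> * perm_vec \<pi> z s))"
    unfolding col_antisym_def
    by (rule hom_sum) (simp_all add: tableau.finite_column_group[OF assms(1)] specht_scale
        perm_vec_in_specht[OF perm assms(2)])
  also have "\<dots> = (\<Sum>\<pi>\<in>column_group la r T. zscale (sign \<pi>) (act \<pi> (f z)))"
    using hom_scale[OF perm_vec_in_specht[OF perm assms(2)]] hom_perm_vec[OF perm assms(2)]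
    by (intro sum.cong) simp_all
  finally show ?thesis .
qed

lemma hom_polytabloid_eq_0_if_kernel_inner:
  assumes part: "is_partition la r" and act: "ZS_module r act" and free: "free_Z_module TYPE('m)"
    and z: "z \<in> specht la r" "f z = 0" and T: "T \<in> tableaux la r"
    and inner: "tabloid_inner la r z (polytabloid la r T) \<noteq> 0"
  shows "f (polytabloid la r T) = 0"
proof -
  have tab: "tableau la r T" using T by (simp add: tableau_def tableaux_def)
  have "zscale (tabloid_inner la r z (polytabloid la r T)) (f (polytabloid la r T)) =
      f (col_antisym la r T z)"
    using tableau.col_antisym_eq_tabloid_inner[OF tab part specht_vanishes_outside_tabloids[OF z(1)]]
      hom_scale[OF polytabloid_in_specht[OF T]] by simp
  also have "\<dots> = 0"
    using hom_col_antisym[OF tab z(1)] z(2) ZS_module_act_zero[OF act tableau.column_group_permutes[OF tab]]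
    by simp
  finally show ?thesis using free_Z_module_zscale_eq_0[OF free inner] by blast
qed

lemma hom_eq_0_if_polytabloid_eq_0:
  assumes act: "ZS_module r act" and T: "T \<in> tableaux la r" and fT: "f (polytabloid la r T) = 0"
    and v: "v \<in> specht la r"
  shows "f v = 0"
proof -
  have f_poly: "f (polytabloid la r T') = 0" if T': "T' \<in> tableaux la r" for T'
  proof -
    obtain \<pi> where \<pi>: "\<pi> permutes {0..<r}" "polytabloid la r T' = perm_vec \<pi> (polytabloid la r T)"
      using polytabloid_conjugate[OF T T'] by blast
    then show ?thesis
      using hom_perm_vec[OF \<pi>(1) polytabloid_in_specht[OF T]] fT ZS_module_act_zero[OF act \<pi>(1)] by simp
  qed
  obtain F c where F: "finite F" "F \<subseteq> tableaux la r" "v = (\<lambda>s. \<Sum>T\<in>F. c T * polytabloid la r T s)"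
    using v by (rule specht_E)
  then have "f v = (\<Sum>T\<in>F. f (\<lambda>s. c T * polytabloid la r T s))"
    by (auto intro!: hom_sum specht_scale polytabloid_in_specht)
  also have "\<dots> = 0"
    using F(2) f_poly by (auto simp: hom_scale polytabloid_in_specht intro!: sum.neutral)
  finally show ?thesis .
qed

end

theorem lemma3p3:
  fixes la :: "nat list" and r :: nat
    and act :: "(nat \<Rightarrow> nat) \<Rightarrow> 'm::ab_group_add \<Rightarrow> 'm"
    and f :: "((nat \<Rightarrow> nat) \<Rightarrow> int) \<Rightarrow> 'm"
  assumes "is_partition la r"
    and "ZS_module r act"
    and "free_Z_module TYPE('m)"
    and "specht_hom la r act f"
    and "\<exists>x\<in>specht la r. f x \<noteq> 0"
  shows "inj_on f (specht la r)"
proof (rule inj_onI, rule ccontr)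
  interpret specht_homomorphism la r act f by unfold_locales (fact assms(4))
  fix x y assume x: "x \<in> specht la r" and y: "y \<in> specht la r" and "f x = f y" and "x \<noteq> y"
  define z where "z = (\<lambda>s. x s - y s)"
  have z: "z \<in> specht la r" "f z = 0" "z \<noteq> (\<lambda>_. 0)"
    using specht_diff[OF x y] hom_diff[OF x y] \<open>f x = f y\<close> \<open>x \<noteq> y\<close> by (auto simp: z_def fun_eq_iff)
  then obtain T where T: "T \<in> tableaux la r" "tabloid_inner la r z (polytabloid la r T) \<noteq> 0"
    using specht_exists_tabloid_inner_ne_0 by blast
  then have "f (polytabloid la r T) = 0"
    using hom_polytabloid_eq_0_if_kernel_inner[OF assms(1-3) z(1,2)] by blast
  then show False
    using hom_eq_0_if_polytabloid_eq_0[OF assms(2) T(1)] assms(5) by blast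
qed

end
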